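(* Let $S=\{l_1=w_1,\dots,l_m=w_m\}$ with $l_1,\dots,l_m$ literals and $w_1,\dots,w_m\ge 0$ reals, and let $N$ be a real. Then $[N\le S]$ is strongly equivalent to the aggregate $sum\langle S\rangle\ge N$, and $[S\le N]$ is strongly equivalent to the aggregate $sum\langle S\rangle\le N$.
   Context: A literal is an atom $a$ or $\neg a$. Formulas with aggregates: atoms and $\bot$; combinations by $\wedge,\vee,\to$ ($\neg F:=F\to\bot$, $\top:=\bot\to\bot$; empty conjunction $\top$, empty disjunction $\bot$); and aggregates $op\langle\{F_1=w_1,\dots,F_n=w_n\}\rangle\prec N$; here $op=sum$. $X$ satisfies the aggregate iff $op(W_X)\prec N$, $W_X$ the multiset of $w_i$ with $X\models F_i$. Reduct: $\bot^X=\bot$; $a^X=a$ if $a\in X$, else $\bot$; $(F\otimes G)^X=F^X\otimes G^X$ if $X\models F\otimes G$, else $\bot$; for an aggregate $A$, $A^X=op\langle\{F_1^X=w_1,\dots\}\rangle\prec N$ if $X\models A$, else $\bot$. $X$ is a stable model of a theory $\Gamma$ if $X\models\Gamma^X$ and no proper subset of $X$ satisfies $\Gamma^X$; two formulas are strongly equivalent if adding either to any theory gives the same stable models. The translations of weight constraints into nested expressions are $$[N\le S]=\bigvee_{I\subseteq\{1,\dots,m\}:\,N\le\sum_{i\in I}w_i}\ \bigwedge_{i\in I}l_i,\qquad [S\le N]=\neg\bigvee_{I\subseteq\{1,\dots,m\}:\,N<\sum_{i\in I}w_i}\ \bigwedge_{i\in I}l_i.$$ *)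

theory Defs
  imports Main "HOL.Real"
begin

datatype rel = RLe | RGe | RLt | RGt | REq | RNeq

fun rel_holds :: "rel \<Rightarrow> real \<Rightarrow> real \<Rightarrow> bool" where
  "rel_holds RLe x N = (x \<le> N)"
| "rel_holds RGe x N = (x \<ge> N)"
| "rel_holds RLt x N = (x < N)"
| "rel_holds RGt x N = (x > N)"
| "rel_holds REq x N = (x = N)"
| "rel_holds RNeq x N = (x \<noteq> N)"

text \<open>An aggregate sum<{F1=w1,...,Fn=wn}> rel N; the multiset of weighted
  formulas is represented by a list (duplicates allowed).\<close>
datatype 'a fml =
    Atom 'a
  | Bot
  | And "'a fml" "'a fml"
  | Or "'a fml" "'a fml"
  | Imp "'a fml" "'a fml"
  | SumAgg "('a fml \<times> real) list" rel real

definition Neg :: "'a fml \<Rightarrow> 'a fml" where "Neg F = Imp F Bot"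
definition Top :: "'a fml" where "Top = Imp Bot Bot"

definition BigAnd :: "'a fml list \<Rightarrow> 'a fml" where "BigAnd Fs = foldr And Fs Top"
definition BigOr :: "'a fml list \<Rightarrow> 'a fml" where "BigOr Fs = foldr Or Fs Bot"

fun sat :: "'a set \<Rightarrow> 'a fml \<Rightarrow> bool" where
  "sat X (Atom a) = (a \<in> X)"
| "sat X Bot = False"
| "sat X (And F G) = (sat X F \<and> sat X G)"
| "sat X (Or F G) = (sat X F \<or> sat X G)"
| "sat X (Imp F G) = (sat X F \<longrightarrow> sat X G)"
| "sat X (SumAgg S r N) =
     rel_holds r (sum_list (map (\<lambda>p. if sat X (fst p) then snd p else 0) S)) N"

fun reduct :: "'a set \<Rightarrow> 'a fml \<Rightarrow> 'a fml" where
  "reduct X (Atom a) = (if a \<in> X then Atom a else Bot)"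
| "reduct X Bot = Bot"
| "reduct X (And F G) = (if sat X (And F G) then And (reduct X F) (reduct X G) else Bot)"
| "reduct X (Or F G) = (if sat X (Or F G) then Or (reduct X F) (reduct X G) else Bot)"
| "reduct X (Imp F G) = (if sat X (Imp F G) then Imp (reduct X F) (reduct X G) else Bot)"
| "reduct X (SumAgg S r N) =
     (if sat X (SumAgg S r N)
      then SumAgg (map (\<lambda>p. (reduct X (fst p), snd p)) S) r N else Bot)"

definition stable_model :: "'a fml set \<Rightarrow> 'a set \<Rightarrow> bool" where
  "stable_model \<Gamma> X \<longleftrightarrow>
     (\<forall>F\<in>\<Gamma>. sat X (reduct X F)) \<and>
     \<not> (\<exists>Y. Y \<subset> X \<and> (\<forall>F\<in>\<Gamma>. sat Y (reduct X F)))"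

definition strongly_equivalent :: "'a fml \<Rightarrow> 'a fml \<Rightarrow> bool" where
  "strongly_equivalent F G \<longleftrightarrow>
     (\<forall>\<Gamma> X. stable_model (insert F \<Gamma>) X \<longleftrightarrow> stable_model (insert G \<Gamma>) X)"

datatype 'a lit = PosL 'a | NegL 'a

fun lit_fml :: "'a lit \<Rightarrow> 'a fml" where
  "lit_fml (PosL a) = Atom a"
| "lit_fml (NegL a) = Neg (Atom a)"

text \<open>S = {l1=w1,...,lm=wm} as a list of (literal, weight) pairs.  Subsets
  I of {1..m} correspond exactly to the sublists of S (subseqs).\<close>

definition wsum :: "('a lit \<times> real) list \<Rightarrow> real" where
  "wsum I = sum_list (map snd I)"

definition lower_wc :: "real \<Rightarrow> ('a lit \<times> real) list \<Rightarrow> 'a fml" where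
  "lower_wc N S =
     BigOr (map (\<lambda>I. BigAnd (map (\<lambda>p. lit_fml (fst p)) I))
                (filter (\<lambda>I. N \<le> wsum I) (subseqs S)))"

definition upper_wc :: "('a lit \<times> real) list \<Rightarrow> real \<Rightarrow> 'a fml" where
  "upper_wc S N =
     Neg (BigOr (map (\<lambda>I. BigAnd (map (\<lambda>p. lit_fml (fst p)) I))
                     (filter (\<lambda>I. N < wsum I) (subseqs S))))"

definition agg_of :: "('a lit \<times> real) list \<Rightarrow> rel \<Rightarrow> real \<Rightarrow> 'a fml" where
  "agg_of S r N = SumAgg (map (\<lambda>p. (lit_fml (fst p), snd p)) S) r N"

end

theory Submission
  imports Defs
begin

(* Strong equivalence of F and G follows as soon as their reducts
   agree, i.e. Y |= F^X iff Y |= G^X for all Y \<subseteq> X: stable models of a theory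
   only ever evaluate reducts at such pairs.  For a literal l, Y |= l^X is a
   fixed truth value "l holds at (Y, X)": a \<in> Y for l = a, a \<notin> X for l = \<not>a.
   Hence both sides reduce to statements about weights:
   - Y |= [N \<le> S]^X iff some sublist I of S whose literals all hold at (Y, X)
     has weight \<ge> N, which (weights being nonnegative) says that the total
     weight of literals holding at (Y, X) is \<ge> N; the aggregate reduct says the
     same plus the same statement at (X, X), implied by monotonicity of weight.
   - [S \<le> N] is a negation, so its reduct at Y only depends on X; the same
     sublist argument (with < in place of \<le>) turns it into "the weight of the
     literals true in X is \<le> N", which is again what the aggregate reduct says,
     its condition at (Y, X) following by monotonicity. *)

text \<open>Formulas whose reducts agree on all pairs \<open>Y \<subseteq> X\<close> are strongly
  equivalent: this is the only way stability inspects a formula.\<close>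
lemma strongly_equivalent_if_reducts_agree:
  assumes "\<And>X Y. Y \<subseteq> X \<Longrightarrow> sat Y (reduct X F) = sat Y (reduct X G)"
  shows "strongly_equivalent F G"
  unfolding strongly_equivalent_def stable_model_def
  using assms by (auto dest: psubset_imp_subset)

text \<open>A reduct satisfied by a subset of \<open>X\<close> forces the formula itself to hold
  in \<open>X\<close> (every non-trivial reduct node is guarded by satisfaction in \<open>X\<close>).\<close>
lemma sat_reduct_imp_sat: "Y \<subseteq> X \<Longrightarrow> sat Y (reduct X F) \<Longrightarrow> sat X F"
  by (induction F) (auto split: if_splits)

lemma sat_BigOr: "sat X (BigOr Fs) = (\<exists>F\<in>set Fs. sat X F)"
  by (induction Fs) (auto simp: BigOr_def)

lemma sat_BigAnd: "sat X (BigAnd Fs) = (\<forall>F\<in>set Fs. sat X F)"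
  by (induction Fs) (auto simp: BigAnd_def Top_def)

lemma sat_reduct_BigOr:
  "Y \<subseteq> X \<Longrightarrow> sat Y (reduct X (BigOr Fs)) = (\<exists>F\<in>set Fs. sat Y (reduct X F))"
  by (induction Fs) (auto simp: BigOr_def dest: sat_reduct_imp_sat)

lemma sat_reduct_BigAnd:
  "Y \<subseteq> X \<Longrightarrow> sat Y (reduct X (BigAnd Fs)) = (\<forall>F\<in>set Fs. sat Y (reduct X F))"
  by (induction Fs) (auto simp: BigAnd_def Top_def dest: sat_reduct_imp_sat)

fun lit_holds :: "'a set \<Rightarrow> 'a set \<Rightarrow> 'a lit \<Rightarrow> bool" where
  "lit_holds Y X (PosL a) = (a \<in> Y)"
| "lit_holds Y X (NegL a) = (a \<notin> X)"

lemma sat_reduct_lit: "Y \<subseteq> X \<Longrightarrow> sat Y (reduct X (lit_fml l)) = lit_holds Y X l"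
  by (cases l) (auto simp: Neg_def)

lemma sat_lit: "sat X (lit_fml l) = lit_holds X X l"
  by (cases l) (auto simp: Neg_def)

lemma lit_holds_mono: "Y \<subseteq> X \<Longrightarrow> lit_holds Y X l \<Longrightarrow> lit_holds X X l"
  by (cases l) auto

text \<open>Total weight of the elements of a weighted list satisfying \<open>P\<close>; this is
  the value the sum aggregate compares with its bound.\<close>
definition weight_of :: "('b \<times> real \<Rightarrow> bool) \<Rightarrow> ('b \<times> real) list \<Rightarrow> real" where
  "weight_of P S = sum_list (map (\<lambda>p. if P p then snd p else 0) S)"

lemma weight_of_mono:
  assumes "\<forall>p\<in>set S. snd p \<ge> 0" "\<And>p. P p \<Longrightarrow> Q p"
  shows "weight_of P S \<le> weight_of Q S"
  unfolding weight_of_def by (rule sum_list_mono) (use assms in auto)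

lemma wsum_filter: "wsum (filter P S) = weight_of P S"
  by (induction S) (auto simp: wsum_def weight_of_def)

lemma filter_in_subseqs: "filter P S \<in> set (subseqs S)"
  by (induction S) (auto simp: Let_def)

lemma wsum_sublist_le_weight_of:
  assumes "\<forall>p\<in>set S. snd p \<ge> 0" "I \<in> set (subseqs S)" "\<forall>p\<in>set I. P p"
  shows "wsum I \<le> weight_of P S"
  using assms
proof (induction S arbitrary: I)
  case Nil
  then show ?case by (simp add: wsum_def weight_of_def)
next
  case (Cons a S)
  have a_bound: "(if P a then snd a else 0) \<ge> 0" and S_nonneg: "\<forall>p\<in>set S. snd p \<ge> 0"
    using Cons.prems(1) by auto
  from Cons.prems(2) obtain J where J: "J \<in> set (subseqs S)" and "I = a # J \<or> I = J"
    by (auto simp: Let_def)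
  then consider "I = a # J" "P a" | "I = J"
    using Cons.prems(3) by auto
  then show ?case
  proof cases
    case 1
    then have "wsum J \<le> weight_of P S"
      using Cons.IH[OF S_nonneg J] Cons.prems(3) by simp
    with 1 show ?thesis by (simp add: wsum_def weight_of_def)
  next
    case 2
    then have "wsum J \<le> weight_of P S"
      using Cons.IH[OF S_nonneg J] Cons.prems(3) by simp
    with 2 a_bound show ?thesis by (simp add: weight_of_def)
  qed
qed

text \<open>The maximal witness is the sublist of all \<open>P\<close>-elements.\<close>
lemma ex_sublist_weight_iff:
  assumes nonneg: "\<forall>p\<in>set S. snd p \<ge> 0"
    and upward: "\<And>x y. Q x \<Longrightarrow> x \<le> y \<Longrightarrow> Q y"
  shows "(\<exists>I\<in>set (subseqs S). Q (wsum I) \<and> (\<forall>p\<in>set I. P p)) = Q (weight_of P S)"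
proof
  assume "\<exists>I\<in>set (subseqs S). Q (wsum I) \<and> (\<forall>p\<in>set I. P p)"
  then obtain I where "I \<in> set (subseqs S)" "Q (wsum I)" "\<forall>p\<in>set I. P p" by blast
  then show "Q (weight_of P S)"
    using upward wsum_sublist_le_weight_of[OF nonneg] by blast
next
  assume "Q (weight_of P S)"
  then show "\<exists>I\<in>set (subseqs S). Q (wsum I) \<and> (\<forall>p\<in>set I. P p)"
    using filter_in_subseqs[of P S] wsum_filter[of P S] by (intro bexI[of _ "filter P S"]) auto
qed

lemma sat_reduct_agg_of:
  assumes "Y \<subseteq> X"
  shows "sat Y (reduct X (agg_of S r N)) =
    (rel_holds r (weight_of (\<lambda>p. lit_holds X X (fst p)) S) N \<and>
     rel_holds r (weight_of (\<lambda>p. lit_holds Y X (fst p)) S) N)"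
proof -
  have in_X: "map (\<lambda>p. if sat X (fst p) then snd p else 0) (map (\<lambda>p. (lit_fml (fst p), snd p)) S)
     = map (\<lambda>p. if lit_holds X X (fst p) then snd p else 0) S"
    by (simp add: sat_lit)
  have in_Y: "map (\<lambda>p. if sat Y (fst p) then snd p else 0)
      (map (\<lambda>p. (reduct X (fst p), snd p)) (map (\<lambda>p. (lit_fml (fst p), snd p)) S))
     = map (\<lambda>p. if lit_holds Y X (fst p) then snd p else 0) S"
    by (simp add: sat_reduct_lit[OF assms])
  show ?thesis
    unfolding agg_of_def reduct.simps sat.simps in_X weight_of_def
    by (simp only: in_Y if_splits sat.simps) auto
qed

lemma sat_reduct_lower_wc:
  assumes nonneg: "\<forall>p\<in>set S. snd p \<ge> 0" and "Y \<subseteq> X"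
  shows "sat Y (reduct X (lower_wc N S)) = (N \<le> weight_of (\<lambda>p. lit_holds Y X (fst p)) S)"
proof -
  have "sat Y (reduct X (lower_wc N S)) =
      (\<exists>I\<in>set (subseqs S). N \<le> wsum I \<and> (\<forall>p\<in>set I. lit_holds Y X (fst p)))"
    unfolding lower_wc_def using \<open>Y \<subseteq> X\<close>
    by (auto simp: sat_reduct_BigOr sat_reduct_BigAnd sat_reduct_lit)
  also have "\<dots> = (N \<le> weight_of (\<lambda>p. lit_holds Y X (fst p)) S)"
    by (rule ex_sublist_weight_iff[OF nonneg]) simp
  finally show ?thesis .
qed

text \<open>Reduct of \<open>[S \<le> N]\<close>: being a negation, it only depends on \<open>X\<close>, and says
  that the literals true in \<open>X\<close> carry weight at most \<open>N\<close>.\<close>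
lemma sat_reduct_upper_wc:
  assumes nonneg: "\<forall>p\<in>set S. snd p \<ge> 0" and "Y \<subseteq> X"
  shows "sat Y (reduct X (upper_wc S N)) = (weight_of (\<lambda>p. lit_holds X X (fst p)) S \<le> N)"
proof -
  define G where "G = BigOr (map (\<lambda>I. BigAnd (map (\<lambda>p. lit_fml (fst p)) I))
                                (filter (\<lambda>I. N < wsum I) (subseqs S)))"
  have "sat Y (reduct X (upper_wc S N)) = (\<not> sat X G)"
    unfolding upper_wc_def Neg_def G_def[symmetric]
    using \<open>Y \<subseteq> X\<close> sat_reduct_imp_sat[OF \<open>Y \<subseteq> X\<close>, of G] by auto
  also have "\<dots> = (\<not> (\<exists>I\<in>set (subseqs S). N < wsum I \<and> (\<forall>p\<in>set I. lit_holds X X (fst p))))"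
    unfolding G_def by (auto simp: sat_BigOr sat_BigAnd sat_lit)
  also have "\<dots> = (\<not> N < weight_of (\<lambda>p. lit_holds X X (fst p)) S)"
    by (subst ex_sublist_weight_iff[OF nonneg]) auto
  finally show ?thesis by (simp only: not_less)
qed

lemma lower_wc_strongly_equivalent:
  assumes nonneg: "\<forall>p\<in>set S. snd p \<ge> 0"
  shows "strongly_equivalent (lower_wc N S) (agg_of S RGe N)"
proof (rule strongly_equivalent_if_reducts_agree)
  fix X Y :: "'a set" assume YX: "Y \<subseteq> X"
  have "weight_of (\<lambda>p. lit_holds Y X (fst p)) S \<le> weight_of (\<lambda>p. lit_holds X X (fst p)) S"
    by (rule weight_of_mono[OF nonneg]) (rule lit_holds_mono[OF YX])
  then show "sat Y (reduct X (lower_wc N S)) = sat Y (reduct X (agg_of S RGe N))"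
    unfolding sat_reduct_lower_wc[OF nonneg YX] sat_reduct_agg_of[OF YX] by auto
qed

lemma upper_wc_strongly_equivalent:
  assumes nonneg: "\<forall>p\<in>set S. snd p \<ge> 0"
  shows "strongly_equivalent (upper_wc S N) (agg_of S RLe N)"
proof (rule strongly_equivalent_if_reducts_agree)
  fix X Y :: "'a set" assume YX: "Y \<subseteq> X"
  have "weight_of (\<lambda>p. lit_holds Y X (fst p)) S \<le> weight_of (\<lambda>p. lit_holds X X (fst p)) S"
    by (rule weight_of_mono[OF nonneg]) (rule lit_holds_mono[OF YX])
  then show "sat Y (reduct X (upper_wc S N)) = sat Y (reduct X (agg_of S RLe N))"
    unfolding sat_reduct_upper_wc[OF nonneg YX] sat_reduct_agg_of[OF YX] by auto
qed

theorem proposition17: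
  fixes S :: "('a lit \<times> real) list" and N :: real
  assumes "\<forall>p\<in>set S. snd p \<ge> 0"
  shows "strongly_equivalent (lower_wc N S) (agg_of S RGe N)
       \<and> strongly_equivalent (upper_wc S N) (agg_of S RLe N)"
  using lower_wc_strongly_equivalent[OF assms] upper_wc_strongly_equivalent[OF assms] by blast

end
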